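(* Let $\mathcal G$ be a strongly connected directed graph with no self loops, vertex set $\mathcal V=\{1,\dots,n\}$ and edge set $\mathcal E=\{1,\dots,m\}$. Let $B=S-D\in\mathbb{R}^{n\times m}$ be its incidence matrix, let $Q=DB^\mathsf{T}$, and let $W=\mathbf{1}z^\mathsf{T}$ and $Q^\ddagger$ be as defined in the context. Let $\omega^{\mathrm u}\in\mathbb{R}^n$ be a constant vector. Consider the dynamics \[ \dot{\tilde\theta}(t)=\omega^{\mathrm u}+c(t),\qquad \tilde\beta(t)=B^\mathsf{T}\tilde\theta(t),\qquad y(t)=D\tilde\beta(t). \] Let $\mathcal T\subset\mathcal E$ be an outward directed spanning tree with root $r$. Let $g_1,\dots,g_{n-1}$ be an ordering of the edges of $\mathcal T$ consistent with the tree order, i.e. $g_a\prec g_b$ implies $a<b$. Let $k>0$ and $k_2>0$. Let $0<t_1<t_2<\dots<t_n$ satisfy $t_{j+1}-t_j>|\tilde\beta_{g_j}(t_j)|/k_2$ for $j=1,\dots,n-1$. For each $i\neq r$, let $j(i)$ denote the unique index with $\mathrm{dst}(g_{j(i)})=i$. Let the control be defined, for each node $i\in\mathcal V$, by \[ c_i(t)=\begin{cases} k\,y_i(t) & \text{if } t<t_1,\\ k\,y_i(t_1)+k_2\,\mathrm{sign}\big(\tilde\beta_{g_{j(i)}}(t)\big) & \text{if } i\neq r \text{ and } t_{j(i)}\le t<t_{j(i)+1},\\ k\,y_i(t_1) & \text{otherwise.}\end{cases} \] Assume that at time $t_1$ the system has converged, in the sense that \[ \tilde\beta(t_1)=-k^{-1}B^\mathsf{T}Q^\ddagger\omega^{\mathrm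 u} \qquad\text{and}\qquad \omega^{\mathrm u}+k\,y(t_1)=W\omega^{\mathrm u}. \] Then $\tilde\beta(t_n)=0$.
   Context: For an edge $e$, $\mathrm{src}(e)$ and $\mathrm{dst}(e)$ denote its source and destination vertices. The matrices $S,D\in\mathbb{R}^{n\times m}$ are defined by $S_{ie}=1$ if node $i$ is the source of edge $e$ and $0$ otherwise, and $D_{ie}=1$ if node $i$ is the destination of edge $e$ and $0$ otherwise. The vector $\mathbf{1}$ is the all-ones vector. The matrix $Q=DB^\mathsf{T}$ is an irreducible rate matrix (nonnegative off-diagonal entries, zero row sums). Let $z>0$ be its left eigenvector for eigenvalue $0$ ($z^\mathsf{T}Q=0$), normalized so that $\mathbf{1}^\mathsf{T}z=1$, and set $W=\mathbf{1}z^\mathsf{T}$. Write $Q=T\begin{bmatrix}0&0\\0&\Lambda\end{bmatrix}T^{-1}$, where $T$ is invertible with first column $\mathbf{1}$, the first row of $T^{-1}$ is $z^\mathsf{T}$, and $\Lambda\in\mathbb{R}^{(n-1)\times(n-1)}$ is invertible. Define $Q^\ddagger=T\begin{bmatrix}0&0\\0&\Lambda^{-1}\end{bmatrix}T^{-1}$. An outward directed spanning tree with root $r$ is a set $\mathcal T$ of $n-1$ edges such that every vertex is reachable from $r$ by a directed path in $\mathcal T$, and each vertex other than $r$ is the destination of exactly one edge of $\mathcal T$. For $f,g\in\mathcal T$, $f\prec g$ means there is a directed walk of nonzero length in $\mathcal T$ from $\mathrm{dst}(f)$ to $\mathrm{dst}(g)$. The convention $\mathrm{sign}(0)=0$ is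 used. Here $\tilde\theta(t)\in\mathbb{R}^n$ are normalized clock phases, $\tilde\beta(t)\in\mathbb{R}^m$ are buffer occupancies relative to the desired offsets, and $\omega(t)=\omega^{\mathrm u}+c(t)$ is the frequency. *)

theory Defs
  imports "HOL-Analysis.Analysis" "Jordan_Normal_Form.Matrix"
begin

(* Graph: vertices 0..<n, edges 0..<m, edge e goes from src e to dst e. *)

definition edge_rel :: "(nat \<Rightarrow> nat) \<Rightarrow> (nat \<Rightarrow> nat) \<Rightarrow> nat set \<Rightarrow> (nat \<times> nat) set" where
  "edge_rel src dst E = {(src e, dst e) | e. e \<in> E}"

definition strongly_connected :: "nat \<Rightarrow> nat \<Rightarrow> (nat \<Rightarrow> nat) \<Rightarrow> (nat \<Rightarrow> nat) \<Rightarrow> bool" where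
  "strongly_connected n m src dst \<longleftrightarrow>
     (\<forall>i<n. \<forall>j<n. (i, j) \<in> (edge_rel src dst {..<m})\<^sup>*)"

definition S_mat :: "nat \<Rightarrow> nat \<Rightarrow> (nat \<Rightarrow> nat) \<Rightarrow> real mat" where
  "S_mat n m src = mat n m (\<lambda>(i, e). if src e = i then 1 else 0)"

definition D_mat :: "nat \<Rightarrow> nat \<Rightarrow> (nat \<Rightarrow> nat) \<Rightarrow> real mat" where
  "D_mat n m dst = mat n m (\<lambda>(i, e). if dst e = i then 1 else 0)"

definition B_mat :: "nat \<Rightarrow> nat \<Rightarrow> (nat \<Rightarrow> nat) \<Rightarrow> (nat \<Rightarrow> nat) \<Rightarrow> real mat" where
  "B_mat n m src dst = S_mat n m src - D_mat n m dst"

definition Q_mat :: "nat \<Rightarrow> nat \<Rightarrow> (nat \<Rightarrow> nat) \<Rightarrow> (nat \<Rightarrow> nat) \<Rightarrow> real mat" where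
  "Q_mat n m src dst = D_mat n m dst * transpose_mat (B_mat n m src dst)"

definition out_spanning_tree ::
  "nat \<Rightarrow> nat \<Rightarrow> (nat \<Rightarrow> nat) \<Rightarrow> (nat \<Rightarrow> nat) \<Rightarrow> nat set \<Rightarrow> nat \<Rightarrow> bool" where
  "out_spanning_tree n m src dst Tr r \<longleftrightarrow>
     Tr \<subseteq> {..<m} \<and> card Tr = n - 1 \<and> r < n \<and>
     (\<forall>i<n. (r, i) \<in> (edge_rel src dst Tr)\<^sup>*) \<and>
     (\<forall>i<n. i \<noteq> r \<longrightarrow> (\<exists>!e. e \<in> Tr \<and> dst e = i))"

definition tree_prec :: "(nat \<Rightarrow> nat) \<Rightarrow> (nat \<Rightarrow> nat) \<Rightarrow> nat set \<Rightarrow> nat \<Rightarrow> nat \<Rightarrow> bool" where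
  "tree_prec src dst Tr f g \<longleftrightarrow> (dst f, dst g) \<in> (edge_rel src dst Tr)\<^sup>+"

definition blk0 :: "nat \<Rightarrow> real mat \<Rightarrow> real mat" where
  "blk0 n L = four_block_mat (0\<^sub>m 1 1) (0\<^sub>m 1 (n - 1)) (0\<^sub>m (n - 1) 1) L"

definition beta_of :: "nat \<Rightarrow> nat \<Rightarrow> (nat \<Rightarrow> nat) \<Rightarrow> (nat \<Rightarrow> nat) \<Rightarrow> (real \<Rightarrow> nat \<Rightarrow> real) \<Rightarrow> real \<Rightarrow> real vec" where
  "beta_of n m src dst \<theta> t = transpose_mat (B_mat n m src dst) *\<^sub>v vec n (\<theta> t)"

definition y_of :: "nat \<Rightarrow> nat \<Rightarrow> (nat \<Rightarrow> nat) \<Rightarrow> (nat \<Rightarrow> nat) \<Rightarrow> (real \<Rightarrow> nat \<Rightarrow> real) \<Rightarrow> real \<Rightarrow> real vec" where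
  "y_of n m src dst \<theta> t = D_mat n m dst *\<^sub>v beta_of n m src dst \<theta> t"

definition jidx :: "nat \<Rightarrow> (nat \<Rightarrow> nat) \<Rightarrow> (nat \<Rightarrow> nat) \<Rightarrow> nat \<Rightarrow> nat" where
  "jidx n dst g i = (THE j. j \<in> {1..n - 1} \<and> dst (g j) = i)"

(* the control law c_i(t); sgn on reals satisfies sgn 0 = 0 *)
definition ctrl ::
  "nat \<Rightarrow> nat \<Rightarrow> (nat \<Rightarrow> nat) \<Rightarrow> (nat \<Rightarrow> nat) \<Rightarrow> nat \<Rightarrow> (nat \<Rightarrow> nat) \<Rightarrow> (nat \<Rightarrow> real)
   \<Rightarrow> real \<Rightarrow> real \<Rightarrow> (real \<Rightarrow> nat \<Rightarrow> real) \<Rightarrow> nat \<Rightarrow> real \<Rightarrow> real" where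
  "ctrl n m src dst r g tt k k2 \<theta> i t =
     (if t < tt 1 then k * (y_of n m src dst \<theta> t $ i)
      else if i \<noteq> r \<and> tt (jidx n dst g i) \<le> t \<and> t < tt (jidx n dst g i + 1)
        then k * (y_of n m src dst \<theta> (tt 1) $ i)
             + k2 * sgn (beta_of n m src dst \<theta> t $ g (jidx n dst g i))
      else k * (y_of n m src dst \<theta> (tt 1) $ i))"

end

theory Submission
  imports Defs
begin

(* After t_1 the consensus condition makes every node drift at the common rate z^T omega^u.
   During [t_j, t_{j+1}) the only extra input acts on the head of the tree edge g_j, as sign
   feedback of size k2 on the offset of g_j; the gap condition lets that offset reach zero
   before t_{j+1} and stay there.  No earlier edge g_a has this node as an endpoint (not as
   head, since heads of tree edges are distinct, and not as tail, since then g_j would precede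
   g_a), so offsets already balanced stay balanced.  At t_n all tree edges are balanced, hence
   all phases agree along the spanning tree and every buffer offset vanishes. *)

lemma DERIV_pos_imp_le_except_countable:
  fixes f :: "real \<Rightarrow> real"
  assumes "a \<le> b" and cont: "continuous_on {a..b} f" and "countable K"
    and der: "\<And>x. x \<in> {a<..<b} - K \<Longrightarrow> \<exists>d>0. (f has_real_derivative d) (at x)"
  shows "f a \<le> f b"
proof (rule ccontr)
  assume "\<not> f a \<le> f b"
  then have "uncountable {f b<..<f a}" by (simp add: uncountable_open_interval)
  then have "\<not> {f b<..<f a} \<subseteq> f ` K"
    using countable_subset[OF _ countable_image[OF \<open>countable K\<close>]] by auto
  then obtain y where y: "f b < y" "y < f a" "y \<notin> f ` K" by (auto simp: subset_eq)
  \<comment> \<open>the last point of \<open>[a, b]\<close> where \<open>f \<ge> y\<close> is a crossing outside \<open>K\<close>, where \<open>f\<close> must increase\<close>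
  define Z where "Z = {a..b} \<inter> f -` {y..}"
  have "compact Z"
    using continuous_closed_preimage[OF cont closed_atLeastAtMost, of "{y..}"]
    unfolding Z_def by (simp add: compact_eq_bounded_closed bounded_Int)
  moreover have "a \<in> Z" using \<open>a \<le> b\<close> y unfolding Z_def by auto
  ultimately obtain x0 where "x0 \<in> Z" and x0_last: "\<forall>t\<in>Z. t \<le> x0"
    using compact_attains_sup by blast
  then have x0: "a \<le> x0" "x0 \<le> b" "y \<le> f x0" unfolding Z_def by auto
  obtain x where x: "x0 \<le> x" "x \<le> b" "f x = y"
    using IVT2'[of f b y x0] x0 y continuous_on_subset[OF cont, of "{x0..b}"] by auto
  then have "x \<in> Z" using x0 unfolding Z_def by auto
  then have "x = x0" using x0_last x by force
  then have fx0: "f x0 = y" using x by simp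
  then have "x0 \<noteq> a" "x0 \<noteq> b" "x0 \<notin> K" using y by auto
  then obtain d where "d > 0" "(f has_real_derivative d) (at x0)"
    using der[of x0] x0 by force
  then obtain \<delta> where "\<delta> > 0" and inc: "\<forall>h>0. h < \<delta> \<longrightarrow> f x0 < f (x0 + h)"
    using DERIV_pos_inc_right by blast
  define h where "h = min (\<delta> / 2) (b - x0)"
  have h: "h > 0" "h < \<delta>" "x0 + h \<le> b"
    using \<open>\<delta> > 0\<close> \<open>x0 \<noteq> b\<close> x0 unfolding h_def by auto
  then have "x0 + h \<in> Z" using inc fx0 x0 unfolding Z_def by auto
  then show False using x0_last h by force
qed

lemma DERIV_nonneg_imp_le_except_countable:
  fixes f f' :: "real \<Rightarrow> real"
  assumes "a \<le> b" and cont: "continuous_on {a..b} f" and K: "countable K"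
    and der: "\<And>x. x \<in> {a<..<b} - K \<Longrightarrow> (f has_real_derivative f' x) (at x) \<and> f' x \<ge> 0"
  shows "f a \<le> f b"
proof (rule field_le_epsilon)
  fix e :: real
  assume "e > 0"
  define \<epsilon> where "\<epsilon> = e / (b - a + 1)"
  have "\<epsilon> > 0" using \<open>e > 0\<close> \<open>a \<le> b\<close> unfolding \<epsilon>_def by auto
  have "(\<lambda>x. f x + \<epsilon> * x) a \<le> (\<lambda>x. f x + \<epsilon> * x) b"
  proof (rule DERIV_pos_imp_le_except_countable[OF \<open>a \<le> b\<close> _ K])
    show "continuous_on {a..b} (\<lambda>x. f x + \<epsilon> * x)"
      by (intro continuous_intros cont)
    fix x
    assume "x \<in> {a<..<b} - K"
    then have "((\<lambda>x. f x + \<epsilon> * x) has_real_derivative f' x + \<epsilon>) (at x)" "f' x + \<epsilon> > 0"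
      using der[of x] \<open>\<epsilon> > 0\<close> by (auto intro!: derivative_eq_intros)
    then show "\<exists>d>0. ((\<lambda>x. f x + \<epsilon> * x) has_real_derivative d) (at x)" by blast
  qed
  moreover have "\<epsilon> * (b - a) \<le> e"
    using \<open>\<epsilon> > 0\<close> \<open>a \<le> b\<close> unfolding \<epsilon>_def by (simp add: field_simps)
  ultimately show "f a \<le> f b + e" by (simp add: algebra_simps)
qed

lemma DERIV_const_imp_affine_except_countable:
  fixes f :: "real \<Rightarrow> real"
  assumes "a \<le> b" and cont: "continuous_on {a..b} f" and K: "countable K"
    and der: "\<And>x. x \<in> {a<..<b} - K \<Longrightarrow> (f has_real_derivative c) (at x)"
  shows "f b = f a + c * (b - a)"
proof -
  have "(\<lambda>x. f x - c * x) a \<le> (\<lambda>x. f x - c * x) b"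
    by (rule DERIV_nonneg_imp_le_except_countable[OF \<open>a \<le> b\<close> _ K, of _ "\<lambda>_. 0"])
      (auto intro!: continuous_intros cont derivative_eq_intros der)
  moreover have "(\<lambda>x. c * x - f x) a \<le> (\<lambda>x. c * x - f x) b"
    by (rule DERIV_nonneg_imp_le_except_countable[OF \<open>a \<le> b\<close> _ K, of _ "\<lambda>_. 0"])
      (auto intro!: continuous_intros cont derivative_eq_intros der)
  ultimately show ?thesis by (simp add: algebra_simps)
qed

lemma sign_feedback_nonpos:
  fixes f :: "real \<Rightarrow> real"
  assumes "a < b" and cont: "continuous_on {a..b} f" and K: "countable K"
    and der: "\<And>x. x \<in> {a<..<b} - K \<Longrightarrow> (f has_real_derivative - c * sgn (f x)) (at x)"
    and "c > 0" and start: "\<bar>f a\<bar> < c * (b - a)"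
  shows "f b \<le> 0"
proof (rule ccontr)
  assume "\<not> f b \<le> 0"
  \<comment> \<open>from the last point \<open>s\<close> before \<open>b\<close> where \<open>f \<le> 0\<close> (or from \<open>a\<close>), \<open>f\<close> decreases at rate \<open>c\<close>\<close>
  define Z where "Z = insert a ({a..b} \<inter> f -` {..0})"
  have "compact Z"
    using continuous_closed_preimage[OF cont closed_atLeastAtMost, of "{..0}"]
    unfolding Z_def by (simp add: compact_eq_bounded_closed bounded_Int)
  then obtain s where "s \<in> Z" and s_last: "\<forall>x\<in>Z. x \<le> s"
    using compact_attains_sup[of Z] unfolding Z_def by blast
  have "a \<le> s \<and> s < b \<and> f s < c * (b - s)"
  proof (cases "s = a")
    case True
    then show ?thesis using \<open>a < b\<close> start by auto
  next
    case False
    then have "a \<le> s" "s \<le> b" "f s \<le> 0" using \<open>s \<in> Z\<close> unfolding Z_def by auto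
    moreover from this have "s \<noteq> b" using \<open>\<not> f b \<le> 0\<close> by auto
    ultimately have "s < b" "f s \<le> 0" by auto
    with \<open>a \<le> s\<close> \<open>c > 0\<close> show ?thesis by (smt (verit) mult_pos_pos)
  qed
  then have s: "a \<le> s" "s < b" "f s < c * (b - s)" by auto
  have pos: "f x > 0" if x: "x \<in> {s<..b}" for x
  proof (rule ccontr)
    assume "\<not> f x > 0"
    then have "x \<in> Z" using x s unfolding Z_def by auto
    then show False using s_last x by fastforce
  qed
  have "f b = f s + (- c) * (b - s)"
  proof (rule DERIV_const_imp_affine_except_countable[OF _ _ K])
    show "continuous_on {s..b} f" using continuous_on_subset[OF cont] s by auto
    fix x
    assume "x \<in> {s<..<b} - K"
    then show "(f has_real_derivative - c) (at x)" using der[of x] pos[of x] s by auto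
  qed (use s in auto)
  with s \<open>\<not> f b \<le> 0\<close> show False by linarith
qed

lemma sign_feedback_reaches_zero:
  fixes f :: "real \<Rightarrow> real"
  assumes "a < b" and cont: "continuous_on {a..b} f" and K: "countable K"
    and der: "\<And>x. x \<in> {a<..<b} - K \<Longrightarrow> (f has_real_derivative - c * sgn (f x)) (at x)"
    and "c > 0" and start: "\<bar>f a\<bar> < c * (b - a)"
  shows "f b = 0"
proof -
  have "f b \<le> 0" by (rule sign_feedback_nonpos[OF assms])
  moreover have "- f b \<le> 0"
  proof (rule sign_feedback_nonpos[OF \<open>a < b\<close> _ K _ \<open>c > 0\<close>])
    show "continuous_on {a..b} (\<lambda>x. - f x)" by (intro continuous_intros cont)
    fix x
    assume "x \<in> {a<..<b} - K"
    then show "((\<lambda>x. - f x) has_real_derivative - c * sgn (- f x)) (at x)"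
      using der by (auto intro!: derivative_eq_intros simp: sgn_minus)
  qed (use start in simp)
  ultimately show ?thesis by simp
qed

lemma beta_of_nth:
  assumes "e < m" "src e < n" "dst e < n"
  shows "beta_of n m src dst \<theta> t $ e = \<theta> t (src e) - \<theta> t (dst e)"
proof -
  have "beta_of n m src dst \<theta> t $ e =
      (\<Sum>i<n. ((if src e = i then 1 else 0) - (if dst e = i then 1 else 0)) * \<theta> t i)"
    using assms unfolding beta_of_def B_mat_def S_mat_def D_mat_def
    by (simp add: scalar_prod_def lessThan_atLeast0)
  also have "\<dots> = (\<Sum>i<n. if src e = i then \<theta> t i else 0) - (\<Sum>i<n. if dst e = i then \<theta> t i else 0)"
    by (simp only: sum_subtractf[symmetric]) (rule sum.cong, auto)
  also have "\<dots> = \<theta> t (src e) - \<theta> t (dst e)" using assms by simp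
  finally show ?thesis .
qed

lemma dim_beta_of [simp]: "dim_vec (beta_of n m src dst \<theta> t) = m"
  unfolding beta_of_def B_mat_def S_mat_def D_mat_def by simp

lemma dim_y_of [simp]: "dim_vec (y_of n m src dst \<theta> t) = n"
  unfolding y_of_def D_mat_def by simp

lemma consensus_nth:
  fixes \<omega> y z :: "real vec"
  assumes "z \<in> carrier_vec n" "dim_vec y = n" "i < n"
    and consensus: "\<omega> + k \<cdot>\<^sub>v y = mat n n (\<lambda>(i, j). z $ j) *\<^sub>v \<omega>"
  shows "\<omega> $ i + k * y $ i = z \<bullet> \<omega>"
proof -
  have "vec n (\<lambda>j. z $ j) = z" using assms(1) by (intro eq_vecI) auto
  then have "(\<omega> + k \<cdot>\<^sub>v y) $ i = z \<bullet> \<omega>" unfolding consensus using assms(3) by simp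
  with assms(2,3) show ?thesis by simp
qed

lemma out_spanning_tree_bij_betw_dst:
  assumes tree: "out_spanning_tree n m src dst Tr r"
  shows "bij_betw dst Tr ({..<n} - {r})"
proof -
  from tree have Tr: "Tr \<subseteq> {..<m}" "card Tr = n - 1" "r < n"
    and uniq: "\<forall>i<n. i \<noteq> r \<longrightarrow> (\<exists>!e. e \<in> Tr \<and> dst e = i)"
    unfolding out_spanning_tree_def by auto
  define h where "h i = (THE e. e \<in> Tr \<and> dst e = i)" for i
  have h: "h i \<in> Tr" "dst (h i) = i" if "i \<in> {..<n} - {r}" for i
    using theI'[OF uniq[rule_format, of i]] that unfolding h_def by auto
  have "inj_on h ({..<n} - {r})" by (metis h(2) inj_onI)
  \<comment> \<open>an injection between finite sets of equal size is onto, so every tree edge is some \<open>h i\<close>\<close>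
  then have h_onto: "h ` ({..<n} - {r}) = Tr"
    using card_image card_subset_eq[OF finite_subset[OF Tr(1)]] h(1) Tr(2,3)
    by (metis card_Diff_singleton_if card_lessThan finite_lessThan image_subsetI lessThan_iff)
  show ?thesis
  proof (rule bij_betw_byWitness[where f' = h])
    show "\<forall>e\<in>Tr. h (dst e) = e" "dst ` Tr \<subseteq> {..<n} - {r}"
      unfolding h_onto[symmetric] by (simp_all add: h(2) image_subset_iff)
  qed (use h in auto)
qed

lemma jidx_eq:
  assumes "inj_on (dst \<circ> g) {1..n - 1}" "j \<in> {1..n - 1}"
  shows "jidx n dst g (dst (g j)) = j"
  unfolding jidx_def using assms by (auto simp: inj_on_def intro!: the_equality)

lemma le_if_increasing_steps:
  fixes tt :: "nat \<Rightarrow> 'a::order"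
  assumes steps: "\<forall>j\<in>{1..<n}. tt j < tt (j + 1)" and "1 \<le> a" "a \<le> b" "b \<le> n"
  shows "tt a \<le> tt b"
  using \<open>a \<le> b\<close> \<open>b \<le> n\<close>
proof (induction b rule: dec_induct)
  case (step b)
  then have "tt b < tt (Suc b)" using steps \<open>1 \<le> a\<close> by auto
  with step show ?case by auto
qed simp

lemma tree_order_parents_first:
  assumes "bij_betw g {1..N} Tr"
    and "\<forall>a\<in>{1..N}. \<forall>b\<in>{1..N}. tree_prec src dst Tr (g a) (g b) \<longrightarrow> a < b"
  shows "\<forall>a\<in>{1..N}. \<forall>j\<in>{1..N}. src (g a) = dst (g j) \<longrightarrow> j < a"
proof (intro ballI impI)
  fix a j
  assume a: "a \<in> {1..N}" and j: "j \<in> {1..N}" and "src (g a) = dst (g j)"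
  then have "(dst (g j), dst (g a)) \<in> edge_rel src dst Tr"
    using assms(1) unfolding edge_rel_def bij_betw_def by force
  then show "j < a" using assms(2) a j unfolding tree_prec_def by blast
qed

lemma eq_root_if_reachable:
  assumes edges: "\<forall>e\<in>Tr. x (src e) = x (dst e)" and "(r, v) \<in> (edge_rel src dst Tr)\<^sup>*"
  shows "x v = x r"
  using \<open>(r, v) \<in> _\<close> by (induction rule: rtrancl_induct) (auto simp: edge_rel_def edges)

lemma ctrl_on_interval:
  assumes steps: "\<forall>j\<in>{1..<n}. tt j < tt (j + 1)"
    and bij: "bij_betw (dst \<circ> g) {1..n - 1} ({..<n} - {r})"
    and j: "j \<in> {1..n - 1}" and t: "tt j < t" "t < tt (j + 1)" and "v < n"
  shows "ctrl n m src dst r g tt k k2 \<theta> v t = k * (y_of n m src dst \<theta> (tt 1) $ v)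
      + (if v = dst (g j) then k2 * sgn (beta_of n m src dst \<theta> t $ g j) else 0)"
proof -
  have inj: "inj_on (dst \<circ> g) {1..n - 1}" using bij by (rule bij_betw_imp_inj_on)
  have img: "(dst \<circ> g) ` {1..n - 1} = {..<n} - {r}" using bij by (rule bij_betw_imp_surj_on)
  have "tt 1 \<le> tt j" by (rule le_if_increasing_steps[OF steps]) (use j in auto)
  with t have after_t1: "\<not> t < tt 1" by simp
  consider "v = r" | i where "i \<in> {1..n - 1}" "v = dst (g i)"
    using img \<open>v < n\<close> by (metis Diff_iff comp_apply imageE insertI1 lessThan_iff singletonD)
  then show ?thesis
  proof cases
    case 1
    then have "v \<noteq> dst (g j)" using img j by force
    with 1 after_t1 show ?thesis unfolding ctrl_def by simp
  next
    case 2
    then have "v \<noteq> r" using img by force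
    have jidx_v: "jidx n dst g v = i" using jidx_eq[OF inj 2(1)] 2(2) by simp
    show ?thesis
    proof (cases "i = j")
      case True
      then show ?thesis using after_t1 t jidx_v \<open>v \<noteq> r\<close> 2 unfolding ctrl_def by simp
    next
      case False
      have "\<not> (tt i \<le> t \<and> t < tt (i + 1))"
      proof
        assume "tt i \<le> t \<and> t < tt (i + 1)"
        moreover consider "i + 1 \<le> j" | "j + 1 \<le> i" using False by linarith
        then have "tt (i + 1) \<le> tt j \<or> tt (j + 1) \<le> tt i"
          by cases (use le_if_increasing_steps[OF steps] 2(1) j in auto)
        ultimately show False using t by auto
      qed
      moreover have "v \<noteq> dst (g j)" using inj False 2 j by (auto simp: inj_on_def)
      ultimately show ?thesis using after_t1 jidx_v \<open>v \<noteq> r\<close> unfolding ctrl_def by auto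
    qed
  qed
qed

lemma phase_deriv_on_interval:
  fixes \<omega> :: "real vec"
  assumes ode: "\<forall>t\<in>{0<..} - K. \<forall>i<n.
      ((\<lambda>s. \<theta> s i) has_real_derivative \<omega> $ i + ctrl n m src dst r g tt k k2 \<theta> i t) (at t)"
    and drift: "\<forall>i<n. \<omega> $ i + k * (y_of n m src dst \<theta> (tt 1) $ i) = c0"
    and "0 < tt 1" and steps: "\<forall>j\<in>{1..<n}. tt j < tt (j + 1)"
    and bij: "bij_betw (dst \<circ> g) {1..n - 1} ({..<n} - {r})"
    and edges: "\<forall>e<m. src e < n \<and> dst e < n" and g_edges: "g ` {1..n - 1} \<subseteq> {..<m}"
  shows "\<forall>j\<in>{1..n - 1}. \<forall>t\<in>{tt j<..<tt (j + 1)} - K. \<forall>v\<in>{..<n}. ((\<lambda>s. \<theta> s v) has_real_derivative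
      c0 + (if v = dst (g j) then k2 * sgn (\<theta> t (src (g j)) - \<theta> t (dst (g j))) else 0)) (at t)"
proof (intro ballI)
  fix j t v
  assume j: "j \<in> {1..n - 1}" and t: "t \<in> {tt j<..<tt (j + 1)} - K" and "v \<in> {..<n}"
  then have "v < n" by simp
  have "tt 1 \<le> tt j" by (rule le_if_increasing_steps[OF steps]) (use j in auto)
  with t \<open>0 < tt 1\<close> have "t > 0" by simp
  have "beta_of n m src dst \<theta> t $ g j = \<theta> t (src (g j)) - \<theta> t (dst (g j))"
    using beta_of_nth g_edges edges j by blast
  then have rate: "\<omega> $ v + ctrl n m src dst r g tt k k2 \<theta> v t
      = c0 + (if v = dst (g j) then k2 * sgn (\<theta> t (src (g j)) - \<theta> t (dst (g j))) else 0)"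
    using ctrl_on_interval[OF steps bij j _ _ \<open>v < n\<close>] t drift \<open>v < n\<close>
    by (simp add: add.assoc[symmetric])
  show "((\<lambda>s. \<theta> s v) has_real_derivative
      c0 + (if v = dst (g j) then k2 * sgn (\<theta> t (src (g j)) - \<theta> t (dst (g j))) else 0)) (at t)"
    unfolding rate[symmetric] using ode \<open>t > 0\<close> t \<open>v < n\<close> by simp
qed

lemma tree_edges_balanced:
  fixes \<theta> :: "real \<Rightarrow> nat \<Rightarrow> real" and tt :: "nat \<Rightarrow> real"
  assumes K: "countable K" and "k2 > 0"
    and steps: "\<forall>j\<in>{1..N}. tt j < tt (j + 1)"
    and parents_first: "\<forall>a\<in>{1..N}. \<forall>j\<in>{1..N}. src (g a) = dst (g j) \<longrightarrow> j < a"
    and inj: "inj_on (dst \<circ> g) {1..N}"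
    and ends: "\<forall>a\<in>{1..N}. src (g a) \<in> V \<and> dst (g a) \<in> V"
    and cont: "\<forall>v\<in>V. continuous_on {tt 1..} (\<lambda>s. \<theta> s v)"
    and deriv: "\<forall>j\<in>{1..N}. \<forall>t\<in>{tt j<..<tt (j + 1)} - K. \<forall>v\<in>V. ((\<lambda>s. \<theta> s v) has_real_derivative
      c0 + (if v = dst (g j) then k2 * sgn (\<theta> t (src (g j)) - \<theta> t (dst (g j))) else 0)) (at t)"
    and gap: "\<forall>j\<in>{1..N}. \<bar>\<theta> (tt j) (src (g j)) - \<theta> (tt j) (dst (g j))\<bar> / k2 < tt (j + 1) - tt j"
  shows "\<forall>a\<in>{1..N}. \<theta> (tt (N + 1)) (src (g a)) = \<theta> (tt (N + 1)) (dst (g a))"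
proof -
  define \<delta> where "\<delta> a t = \<theta> t (src (g a)) - \<theta> t (dst (g a))" for a t
  have \<delta>_cont: "continuous_on {tt j..tt (j + 1)} (\<delta> a)" if "a \<in> {1..N}" "j \<in> {1..N}" for a j
  proof -
    have "tt 1 \<le> tt j" by (rule le_if_increasing_steps[of "N + 1"]) (use steps that in auto)
    then have "continuous_on {tt j..tt (j + 1)} (\<lambda>s. \<theta> s v)" if "v \<in> V" for v
      using continuous_on_subset[OF cont[rule_format, OF that]] by auto
    then show ?thesis unfolding \<delta>_def using ends that by (intro continuous_intros) auto
  qed
  have \<delta>_deriv: "(\<delta> a has_real_derivative
      (if src (g a) = dst (g j) then k2 * sgn (\<delta> j t) else 0)
      - (if dst (g a) = dst (g j) then k2 * sgn (\<delta> j t) else 0)) (at t)"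
    if "a \<in> {1..N}" "j \<in> {1..N}" "t \<in> {tt j<..<tt (j + 1)} - K" for a j t
    using DERIV_diff[OF deriv[rule_format, of j t "src (g a)"] deriv[rule_format, of j t "dst (g a)"]]
      ends that unfolding \<delta>_def by simp
  have interval_step: "\<delta> a (tt (j + 1)) = 0"
    if j: "j \<in> {1..N}" and a: "a \<in> {1..j}" and earlier: "a < j \<Longrightarrow> \<delta> a (tt j) = 0" for a j
  proof (cases "a = j")
    case True
    have "src (g j) \<noteq> dst (g j)" using parents_first j by blast
    show ?thesis
      unfolding True
    proof (rule sign_feedback_reaches_zero[OF _ \<delta>_cont[OF j j] K _ \<open>k2 > 0\<close>])
      fix t
      assume "t \<in> {tt j<..<tt (j + 1)} - K"
      then show "(\<delta> j has_real_derivative - k2 * sgn (\<delta> j t)) (at t)"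
        using \<delta>_deriv[OF j j] \<open>src (g j) \<noteq> dst (g j)\<close> by simp
    qed (use steps[rule_format, OF j] gap[rule_format, OF j] \<open>k2 > 0\<close>
        in \<open>simp_all add: \<delta>_def pos_divide_less_eq mult.commute\<close>)
  next
    case False
    with a j have "a < j" and a': "a \<in> {1..N}" by auto
    have "src (g a) \<noteq> dst (g j)" using parents_first[rule_format, OF a' j] \<open>a < j\<close> by auto
    moreover have "dst (g a) \<noteq> dst (g j)" using inj_onD[OF inj _ a' j] \<open>a < j\<close> by auto
    ultimately have "(\<delta> a has_real_derivative 0) (at t)" if "t \<in> {tt j<..<tt (j + 1)} - K" for t
      using \<delta>_deriv[OF a' j that] by simp
    then have "\<delta> a (tt (j + 1)) = \<delta> a (tt j) + 0 * (tt (j + 1) - tt j)"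
      by (intro DERIV_const_imp_affine_except_countable[OF _ \<delta>_cont[OF a' j] K])
        (use steps[rule_format, OF j] in auto)
    with earlier \<open>a < j\<close> show ?thesis by simp
  qed
  have "\<forall>a\<in>{1..<j}. \<delta> a (tt j) = 0" if "1 \<le> j" "j \<le> N + 1" for j
    using that
  proof (induction j rule: dec_induct)
    case (step j)
    then have "j \<in> {1..N}" by simp
    with step.IH show ?case using interval_step[of j] by auto
  qed simp
  then show ?thesis unfolding \<delta>_def by auto
qed

theorem theorem2:
  fixes n m :: nat and src dst :: "nat \<Rightarrow> nat"
    and z :: "real vec" and T Ti \<Lambda> \<Lambda>i :: "real mat"
    and \<omega> :: "real vec" and \<theta> :: "real \<Rightarrow> nat \<Rightarrow> real"
    and Tr :: "nat set" and r :: nat and g :: "nat \<Rightarrow> nat"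
    and k k2 :: real and tt :: "nat \<Rightarrow> real"
  assumes n_pos: "n \<ge> 1"
    and edges_ok: "\<forall>e<m. src e < n \<and> dst e < n"
    and no_loops: "\<forall>e<m. src e \<noteq> dst e"
    and strong: "strongly_connected n m src dst"
    (* z: positive left eigenvector of Q for eigenvalue 0, normalised *)
    and z_dim: "z \<in> carrier_vec n"
    and z_pos: "\<forall>i<n. z $ i > 0"
    and z_eig: "transpose_mat (Q_mat n m src dst) *\<^sub>v z = 0\<^sub>v n"
    and z_norm: "(\<Sum>i<n. z $ i) = 1"
    (* decomposition Q = T [0 0; 0 \<Lambda>] T^-1 *)
    and T_dim: "T \<in> carrier_mat n n" and Ti_dim: "Ti \<in> carrier_mat n n"
    and T_inv: "T * Ti = 1\<^sub>m n" "Ti * T = 1\<^sub>m n"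
    and T_col: "col T 0 = vec n (\<lambda>_. 1)"
    and Ti_row: "row Ti 0 = z"
    and L_dim: "\<Lambda> \<in> carrier_mat (n - 1) (n - 1)" and Li_dim: "\<Lambda>i \<in> carrier_mat (n - 1) (n - 1)"
    and L_inv: "\<Lambda> * \<Lambda>i = 1\<^sub>m (n - 1)" "\<Lambda>i * \<Lambda> = 1\<^sub>m (n - 1)"
    and Q_decomp: "Q_mat n m src dst = T * blk0 n \<Lambda> * Ti"
    (* constant vector \<omega>^u *)
    and \<omega>_dim: "\<omega> \<in> carrier_vec n"
    (* dynamics: theta_i continuous, d/dt theta_i = \<omega>_i + c_i(t) except on a countable set *)
    and \<theta>_cont: "\<forall>i<n. continuous_on {0..} (\<lambda>t. \<theta> t i)"
    and \<theta>_ode: "\<exists>K. countable K \<and> (\<forall>t \<in> {0<..} - K. \<forall>i<n.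
        ((\<lambda>s. \<theta> s i) has_real_derivative (\<omega> $ i + ctrl n m src dst r g tt k k2 \<theta> i t)) (at t))"
    (* spanning tree and consistent ordering of its edges *)
    and tree: "out_spanning_tree n m src dst Tr r"
    and g_bij: "bij_betw g {1..n - 1} Tr"
    and g_order: "\<forall>a\<in>{1..n - 1}. \<forall>b\<in>{1..n - 1}. tree_prec src dst Tr (g a) (g b) \<longrightarrow> a < b"
    and k_pos: "k > 0" and k2_pos: "k2 > 0"
    and t_pos: "0 < tt 1"
    and t_mono: "\<forall>j\<in>{1..<n}. tt j < tt (j + 1)"
    and t_gap: "\<forall>j\<in>{1..n - 1}. tt (j + 1) - tt j > \<bar>beta_of n m src dst \<theta> (tt j) $ g j\<bar> / k2"
    (* convergence at time t_1 *)
    and conv_beta: "beta_of n m src dst \<theta> (tt 1) =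
        (- (1 / k)) \<cdot>\<^sub>v (transpose_mat (B_mat n m src dst) *\<^sub>v ((T * blk0 n \<Lambda>i * Ti) *\<^sub>v \<omega>))"
    and conv_y: "\<omega> + k \<cdot>\<^sub>v y_of n m src dst \<theta> (tt 1) = mat n n (\<lambda>(i, j). z $ j) *\<^sub>v \<omega>"
  shows "beta_of n m src dst \<theta> (tt n) = 0\<^sub>v m"
proof -
  obtain K where K: "countable K" and ode: "\<forall>t\<in>{0<..} - K. \<forall>i<n.
      ((\<lambda>s. \<theta> s i) has_real_derivative \<omega> $ i + ctrl n m src dst r g tt k k2 \<theta> i t) (at t)"
    using \<theta>_ode by blast
  have drift: "\<forall>i<n. \<omega> $ i + k * (y_of n m src dst \<theta> (tt 1) $ i) = z \<bullet> \<omega>"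
    using consensus_nth[OF z_dim _ _ conv_y] by simp
  from tree have Tr_edges: "Tr \<subseteq> {..<m}" and reach: "\<forall>i<n. (r, i) \<in> (edge_rel src dst Tr)\<^sup>*"
    unfolding out_spanning_tree_def by auto
  have g_edges: "g ` {1..n - 1} \<subseteq> {..<m}" using g_bij Tr_edges by (simp add: bij_betw_def)
  have bij: "bij_betw (dst \<circ> g) {1..n - 1} ({..<n} - {r})"
    using bij_betw_trans[OF g_bij out_spanning_tree_bij_betw_dst[OF tree]] by simp
  have steps: "\<forall>j\<in>{1..n - 1}. tt j < tt (j + 1)" using t_mono n_pos by auto
  have beta_tree: "beta_of n m src dst \<theta> t $ g j = \<theta> t (src (g j)) - \<theta> t (dst (g j))"
    if "j \<in> {1..n - 1}" for j t
    using beta_of_nth g_edges edges_ok that by blast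
  have "\<forall>a\<in>{1..n - 1}. \<theta> (tt (n - 1 + 1)) (src (g a)) = \<theta> (tt (n - 1 + 1)) (dst (g a))"
  proof (rule tree_edges_balanced[OF K k2_pos steps tree_order_parents_first[OF g_bij g_order]
        bij_betw_imp_inj_on[OF bij] _ _
        phase_deriv_on_interval[OF ode drift t_pos t_mono bij edges_ok g_edges]])
    show "\<forall>a\<in>{1..n - 1}. src (g a) \<in> {..<n} \<and> dst (g a) \<in> {..<n}" using g_edges edges_ok by auto
    show "\<forall>v\<in>{..<n}. continuous_on {tt 1..} (\<lambda>s. \<theta> s v)"
      using \<theta>_cont t_pos by (auto intro: continuous_on_subset)
    show "\<forall>j\<in>{1..n - 1}. \<bar>\<theta> (tt j) (src (g j)) - \<theta> (tt j) (dst (g j))\<bar> / k2 < tt (j + 1) - tt j"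
      using t_gap beta_tree by simp
  qed
  then have "\<forall>e\<in>Tr. \<theta> (tt n) (src e) = \<theta> (tt n) (dst e)"
    using n_pos g_bij by (auto simp: bij_betw_def)
  then have "\<theta> (tt n) v = \<theta> (tt n) r" if "v < n" for v
    using eq_root_if_reachable reach that by blast
  then show ?thesis
    using edges_ok by (intro eq_vecI) (auto simp: beta_of_nth)
qed

end
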